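(* Let $n\ge 6$, let $D\subseteq[n]\setminus\{1,2,3,4\}$ with $|D|\ge2$, and let $H_2$ be the $3$-graph on $[n]$ with edge set $\big(E(B(2,n-2))\setminus\{2ij:i,j\in D\}\big)\cup\{34i: i\in D\}$. Then $\lambda(H_2)\le\frac{\sqrt3}{18}$.
   Context: $B(2,n-2)$ is the $3$-graph on $[n]$ whose edge set is $\{e\in\binom{[n]}3: e\cap\{1,2\}\neq\emptyset\}$. For a $3$-graph $G$ on $[n]$, $\lambda(G)=\max\{\sum_{e\in E(G)}\prod_{i\in e}x_i:\sum_i x_i=1,x_i\ge0\}$. *)

theory Defs
  imports Complex_Main
begin

definition B2 :: "nat \<Rightarrow> nat set set" where
  "B2 n = {e. e \<subseteq> {1..n} \<and> card e = 3 \<and> e \<inter> {1,2} \<noteq> {}}"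

definition lagrangian_poly :: "nat set set \<Rightarrow> (nat \<Rightarrow> real) \<Rightarrow> real" where
  "lagrangian_poly G x = (\<Sum>e\<in>G. \<Prod>i\<in>e. x i)"

definition lagrangian :: "nat \<Rightarrow> nat set set \<Rightarrow> real" where
  "lagrangian n G = Sup {lagrangian_poly G x | x.
       (\<forall>i\<in>{1..n}. 0 \<le> x i) \<and> (\<Sum>i\<in>{1..n}. x i) = 1}"

definition H2 :: "nat \<Rightarrow> nat set \<Rightarrow> nat set set" where
  "H2 n D = (B2 n - {{2, i, j} | i j. i \<in> D \<and> j \<in> D}) \<union> {{3, 4, i} | i. i \<in> D}"

end

theory Submission
  imports Defs
begin

text \<open>Write \<open>a = x 1\<close>, \<open>b = x 2\<close>, \<open>u = x 3 + x 4\<close>, \<open>y\<close> for the weight on \<open>D\<close> and \<open>z\<close> for the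
weight on the remaining vertices. The edge polynomial of \<open>H2\<close> is
\<open>a e\<^sub>2(V - {1}) + b (e\<^sub>2(V - {1,2}) - e\<^sub>2(D)) + x 3 x 4 y\<close>, where \<open>e\<^sub>2\<close> is the second elementary
symmetric polynomial. Bounding \<open>x 3 x 4 \<le> u\<^sup>2/4\<close> and the pair sums inside \<open>D\<close> and inside the
rest by half their squared weights leaves a polynomial \<open>F(a,b,u,y,z)\<close> on the simplex. With
\<open>m = a + b\<close>: if \<open>y \<le> m\<close>, then \<open>F \<le> t(1-2t)(1-t)\<close> for \<open>t = m/2\<close>, whose maximum is \<open>\<surd>3/18\<close>; if
\<open>y > m\<close>, then \<open>m \<le> 1/2\<close>, and maximising over \<open>b\<close> and bounding \<open>u\<^sup>2(y - m)\<close> by AM-GM gives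
\<open>F \<le> 0.0962 < \<surd>3/18\<close>.\<close>

definition pairs :: "'a set \<Rightarrow> 'a set set" where
  "pairs A = {f. f \<subseteq> A \<and> card f = 2}"

definition pair_sum :: "('a \<Rightarrow> real) \<Rightarrow> 'a set \<Rightarrow> real" where
  "pair_sum x A = (\<Sum>f\<in>pairs A. \<Prod>i\<in>f. x i)"

lemma pairs_eq: "pairs A = {{i, j} | i j. i \<in> A \<and> j \<in> A \<and> i \<noteq> j}"
  unfolding pairs_def by (auto simp: card_2_iff)

lemma pairs_subset_Pow: "pairs A \<subseteq> Pow A"
  unfolding pairs_def by auto

lemma finite_pairs: "finite A \<Longrightarrow> finite (pairs A)"
  by (rule finite_subset[OF pairs_subset_Pow]) simp

lemma pairs_mono: "A \<subseteq> B \<Longrightarrow> pairs A \<subseteq> pairs B"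
  unfolding pairs_def by blast

lemma pairs_insert: "a \<notin> A \<Longrightarrow> pairs (insert a A) = pairs A \<union> (\<lambda>j. {a, j}) ` A"
  unfolding pairs_eq by auto

lemma sum_prod_image_insert:
  fixes x :: "'a \<Rightarrow> real"
  assumes "\<And>e. e \<in> F \<Longrightarrow> finite e \<and> p \<notin> e"
  shows "(\<Sum>e\<in>insert p ` F. \<Prod>i\<in>e. x i) = x p * (\<Sum>e\<in>F. \<Prod>i\<in>e. x i)"
proof -
  have "inj_on (insert p) F"
    by (rule inj_onI) (metis assms Diff_insert_absorb)
  then have "(\<Sum>e\<in>insert p ` F. \<Prod>i\<in>e. x i) = (\<Sum>e\<in>F. \<Prod>i\<in>insert p e. x i)"
    by (simp add: sum.reindex)
  also have "\<dots> = (\<Sum>e\<in>F. x p * (\<Prod>i\<in>e. x i))"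
    by (rule sum.cong) (use assms in auto)
  finally show ?thesis by (simp add: sum_distrib_left)
qed

lemma pair_sum_insert:
  assumes "finite A" "a \<notin> A"
  shows "pair_sum x (insert a A) = pair_sum x A + x a * sum x A"
proof -
  have img: "(\<lambda>j. {a, j}) ` A = insert a ` (\<lambda>j. {j}) ` A"
    by auto
  have "(\<Sum>e\<in>(\<lambda>j. {a, j}) ` A. \<Prod>i\<in>e. x i) = x a * (\<Sum>e\<in>(\<lambda>j. {j}) ` A. \<Prod>i\<in>e. x i)"
    unfolding img by (rule sum_prod_image_insert) (use assms(2) in auto)
  also have "\<dots> = x a * sum x A"
    by (simp add: sum.reindex)
  finally have new_pairs: "(\<Sum>e\<in>(\<lambda>j. {a, j}) ` A. \<Prod>i\<in>e. x i) = x a * sum x A" .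
  have "pairs A \<inter> (\<lambda>j. {a, j}) ` A = {}"
    using assms(2) unfolding pairs_def by blast
  then have "pair_sum x (insert a A) = pair_sum x A + (\<Sum>e\<in>(\<lambda>j. {a, j}) ` A. \<Prod>i\<in>e. x i)"
    unfolding pair_sum_def pairs_insert[OF assms(2)]
    by (intro sum.union_disjoint finite_pairs finite_imageI assms(1))
  with new_pairs show ?thesis by simp
qed

lemma pair_sum_union:
  assumes "finite A" "finite B" "A \<inter> B = {}"
  shows "pair_sum x (A \<union> B) = pair_sum x A + pair_sum x B + sum x A * sum x B"
  using assms(2,3)
proof (induction B rule: finite_induct)
  case empty
  then show ?case by (simp add: pair_sum_def pairs_def)
next
  case (insert b B)
  have "A \<union> insert b B = insert b (A \<union> B)" by auto
  then have "pair_sum x (A \<union> insert b B) = pair_sum x (A \<union> B) + x b * sum x (A \<union> B)"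
    using insert assms(1) by (simp add: pair_sum_insert)
  also have "\<dots> = pair_sum x A + pair_sum x B + sum x A * sum x B + x b * (sum x A + sum x B)"
    using insert assms(1) by (simp add: sum.union_disjoint)
  finally show ?case using insert by (simp add: pair_sum_insert algebra_simps)
qed

lemma pair_sum_le_half_square:
  assumes "finite A" "\<And>i. i \<in> A \<Longrightarrow> 0 \<le> x i"
  shows "2 * pair_sum x A \<le> (sum x A)\<^sup>2"
  using assms
proof (induction A rule: finite_induct)
  case empty
  then show ?case by (simp add: pair_sum_def pairs_def)
next
  case (insert a A)
  have "(sum x (insert a A))\<^sup>2 = x a * x a + 2 * (x a * sum x A) + (sum x A)\<^sup>2"
    using insert.hyps by (simp add: power2_eq_square algebra_simps)
  moreover have "2 * pair_sum x A \<le> (sum x A)\<^sup>2"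
    using insert by auto
  moreover have "0 \<le> x a * x a"
    by simp
  ultimately show ?case
    using pair_sum_insert[OF insert.hyps, of x] by linarith
qed

lemma image_insert_card_subsets:
  assumes "finite A" "p \<notin> A"
  shows "insert p ` {f. f \<subseteq> A \<and> card f = k} = {e. e \<subseteq> insert p A \<and> p \<in> e \<and> card e = Suc k}"
proof (intro equalityI subsetI)
  fix e assume "e \<in> insert p ` {f. f \<subseteq> A \<and> card f = k}"
  then obtain f where "f \<subseteq> A" "card f = k" "e = insert p f" by blast
  moreover have "finite f"
    using \<open>f \<subseteq> A\<close> assms(1) by (rule finite_subset)
  moreover have "p \<notin> f"
    using \<open>f \<subseteq> A\<close> assms(2) by blast
  ultimately show "e \<in> {e. e \<subseteq> insert p A \<and> p \<in> e \<and> card e = Suc k}"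
    by auto
next
  fix e assume e: "e \<in> {e. e \<subseteq> insert p A \<and> p \<in> e \<and> card e = Suc k}"
  then have "finite e"
    by (intro card_ge_0_finite) simp
  with e have "e - {p} \<subseteq> A" "card (e - {p}) = k" "insert p (e - {p}) = e"
    by (auto simp: card_Diff_singleton)
  then show "e \<in> insert p ` {f. f \<subseteq> A \<and> card f = k}"
    by (metis (mono_tags, lifting) image_eqI mem_Collect_eq)
qed

lemma sum_prod_image_insert_pairs:
  fixes x :: "'a \<Rightarrow> real"
  assumes "p \<notin> A"
  shows "(\<Sum>e\<in>insert p ` pairs A. \<Prod>i\<in>e. x i) = x p * pair_sum x A"
  unfolding pair_sum_def
  by (rule sum_prod_image_insert) (use assms in \<open>auto simp: pairs_def intro: card_ge_0_finite\<close>)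

lemma B2_eq:
  assumes "2 \<le> n"
  shows "B2 n = insert 1 ` pairs ({1..n} - {1}) \<union> insert 2 ` pairs ({1..n} - {1, 2})"
proof -
  have "B2 n = {e. e \<subseteq> insert 1 ({1..n} - {1}) \<and> 1 \<in> e \<and> card e = Suc 2}
      \<union> {e. e \<subseteq> insert 2 ({1..n} - {1, 2}) \<and> 2 \<in> e \<and> card e = Suc 2}"
    using assms unfolding B2_def by auto
  then show ?thesis
    unfolding pairs_def by (simp add: image_insert_card_subsets)
qed

lemma finite_B2: "finite (B2 n)"
  by (rule finite_subset[of _ "Pow {1..n}"]) (auto simp: B2_def)

lemma lagrangian_poly_B2:
  assumes "2 \<le> n"
  shows "lagrangian_poly (B2 n) x = x 1 * pair_sum x ({1..n} - {1}) + x 2 * pair_sum x ({1..n} - {1, 2})"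
proof -
  have "insert 1 ` pairs ({1..n} - {1}) \<inter> insert 2 ` pairs ({1..n} - {1, 2}) = {}"
    by (auto simp: pairs_def)
  then show ?thesis
    unfolding lagrangian_poly_def B2_eq[OF assms]
    by (simp add: sum.union_disjoint finite_pairs sum_prod_image_insert_pairs)
qed

lemma H2_eq:
  assumes "2 \<notin> D"
  shows "H2 n D = (B2 n - insert 2 ` pairs D) \<union> (\<lambda>i. {3, 4, i}) ` D"
proof -
  have "e \<in> {{2, i, j} | i j. i \<in> D \<and> j \<in> D} \<longleftrightarrow> e \<in> insert 2 ` pairs D" if "card e = 3" for e
  proof
    assume "e \<in> {{2, i, j} | i j. i \<in> D \<and> j \<in> D}"
    then obtain i j where ij: "e = {2, i, j}" "i \<in> D" "j \<in> D" by blast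
    then have "i \<noteq> j"
      using that by (auto simp: card_insert_if insert_absorb2 split: if_splits)
    with ij show "e \<in> insert 2 ` pairs D"
      unfolding pairs_eq by blast
  qed (auto simp: pairs_eq)
  then have "B2 n - {{2, i, j} | i j. i \<in> D \<and> j \<in> D} = B2 n - insert 2 ` pairs D"
    unfolding B2_def by blast
  then show ?thesis
    unfolding H2_def by (simp add: setcompr_eq_image)
qed

lemma lagrangian_poly_H2:
  assumes "2 \<le> n" "D \<subseteq> {1..n} - {1, 2, 3, 4}"
  shows "lagrangian_poly (H2 n D) x = x 1 * pair_sum x ({1..n} - {1})
      + x 2 * (pair_sum x ({1..n} - {1, 2}) - pair_sum x D) + x 3 * x 4 * sum x D"
proof -
  let ?S = "insert 2 ` pairs D" and ?E = "(\<lambda>i. {3, 4, i}) ` D"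
  have two_notin: "2 \<notin> D"
    using assms(2) by auto
  have fin_D: "finite D"
    by (rule finite_subset[OF assms(2)]) simp
  have "pairs D \<subseteq> pairs ({1..n} - {1, 2})"
    using assms(2) by (intro pairs_mono) blast
  then have S_sub: "?S \<subseteq> B2 n"
    unfolding B2_eq[OF assms(1)] by blast
  have disj: "(B2 n - ?S) \<inter> ?E = {}"
    using assms(2) unfolding B2_def by auto
  have "inj_on (\<lambda>i. {3, 4, i}) D"
    using assms(2) by (intro inj_onI) auto
  then have "(\<Sum>e\<in>?E. \<Prod>k\<in>e. x k) = (\<Sum>i\<in>D. \<Prod>k\<in>{3, 4, i}. x k)"
    by (simp add: sum.reindex)
  also have "\<dots> = (\<Sum>i\<in>D. x 3 * x 4 * x i)"
  proof (rule sum.cong)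
    fix i assume "i \<in> D"
    then have "i \<noteq> 3" "i \<noteq> 4"
      using assms(2) by auto
    then show "(\<Prod>k\<in>{3, 4, i}. x k) = x 3 * x 4 * x i"
      by (simp add: mult.assoc)
  qed simp
  finally have sum_E: "(\<Sum>e\<in>?E. \<Prod>k\<in>e. x k) = x 3 * x 4 * sum x D"
    by (simp add: sum_distrib_left)
  have "lagrangian_poly (H2 n D) x
      = lagrangian_poly (B2 n) x - (\<Sum>e\<in>?S. \<Prod>k\<in>e. x k) + (\<Sum>e\<in>?E. \<Prod>k\<in>e. x k)"
    using S_sub disj fin_D finite_B2[of n] assms(2)
    unfolding lagrangian_poly_def H2_eq[of D n, OF two_notin]
    by (simp add: sum.union_disjoint sum_diff)
  then show ?thesis
    by (simp add: lagrangian_poly_B2[OF assms(1)] sum_prod_image_insert_pairs[OF two_notin] sum_E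
        algebra_simps)
qed

text \<open>The polynomial \<open>F\<close>: \<open>u = x 3 + x 4\<close>, \<open>y\<close> is the weight on \<open>D\<close> and \<open>z\<close> the weight on the
vertices outside \<open>D \<union> {1,2,3,4}\<close>.\<close>

definition reduced_poly :: "real \<Rightarrow> real \<Rightarrow> real \<Rightarrow> real \<Rightarrow> real \<Rightarrow> real" where
  "reduced_poly a b u y z = a * b * (u + y + z) + (a + b) * (u\<^sup>2 / 4 + u * z + z\<^sup>2 / 2 + (u + z) * y)
     + a * y\<^sup>2 / 2 + u\<^sup>2 * y / 4"

lemma cubic_le_sqrt3_div_18:
  fixes t :: real
  assumes "0 \<le> t" "t \<le> 1/2"
  shows "t * (1 - 2*t) * (1 - t) \<le> sqrt 3 / 18"
proof -
  \<comment> \<open>the maximum is attained at \<open>t = (3 - \<surd>3)/6\<close>\<close>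
  define s where "s = sqrt 3"
  have "s * s = 3" "0 \<le> s"
    unfolding s_def by simp_all
  moreover have "(6*t - 3 + s)\<^sup>2 * (3 + 2*s - 6*t)
      = 6*s - 108 * (t * (1 - 2*t) * (1 - t)) + (s*s - 3) * (2*s - 9 + 18*t)"
    by (simp add: algebra_simps power2_eq_square)
  moreover have "0 \<le> (6*t - 3 + s)\<^sup>2 * (3 + 2*s - 6*t)"
    using \<open>0 \<le> s\<close> assms by (intro mult_nonneg_nonneg) auto
  ultimately have "108 * (t * (1 - 2*t) * (1 - t)) \<le> 6 * s"
    by simp
  then show ?thesis
    unfolding s_def by linarith
qed

lemma sq_mult_le_of_add_le:
  fixes u v k :: real
  assumes "0 \<le> u" "0 \<le> v" "u + v \<le> k"
  shows "u\<^sup>2 * v \<le> 4 * k^3 / 27"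
proof -
  have "u\<^sup>2 * v \<le> u\<^sup>2 * (k - u)"
    using assms by (intro mult_left_mono) auto
  moreover have "4 * k^3 - 27 * (u\<^sup>2 * (k - u)) = (3*u - 2*k)\<^sup>2 * (3*u + k)"
    by (simp add: algebra_simps power2_eq_square power3_eq_cube)
  moreover have "0 \<le> (3*u - 2*k)\<^sup>2 * (3*u + k)"
    using assms by (intro mult_nonneg_nonneg) auto
  ultimately show ?thesis by linarith
qed

lemma quadratic_le_vertex:
  fixes b c m S :: real
  shows "4 * S * ((m - b) * b * S - b * c) \<le> (m * S - c)\<^sup>2"
proof -
  have "(m * S - c)\<^sup>2 - 4 * S * ((m - b) * b * S - b * c) = (m * S - c - 2 * S * b)\<^sup>2"
    by (simp add: algebra_simps power2_eq_square)
  then show ?thesis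
    by (metis diff_ge_0_iff_ge zero_le_power2)
qed

text \<open>\<open>962/10000\<close> lies just below \<open>\<surd>3/18 \<approx> 0.096225\<close>; the slack keeps the difference a positive
quartic on \<open>[0, 1/2]\<close>.\<close>

lemma heavy_case_poly_le:
  fixes m :: real
  assumes "0 \<le> m" "m \<le> 1/2"
  shows "(m * (1 - m) - m\<^sup>2 / 2)\<^sup>2 \<le> 4 * (1 - m) * (962/10000 - m * (1 - m)\<^sup>2 / 2 - (1 - 2*m)^3 / 27)"
proof -
  have "m\<^sup>2 \<le> 1/4"
    using assms power_mono[of m "1/2" 2] by (simp add: power2_eq_square)
  moreover have "m^3 \<le> m\<^sup>2 / 2" "m^4 \<le> m\<^sup>2 / 4"
    using assms mult_left_mono[of m "1/2" "m\<^sup>2"] mult_left_mono[of "m\<^sup>2" "1/4" "m\<^sup>2"] \<open>m\<^sup>2 \<le> 1/4\<close>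
    by (simp_all add: power3_eq_cube power4_eq_xxxx power2_eq_square mult.assoc)
  moreover have "0 < 7987/33750 - 45487/33750 * m + 845/432 * m\<^sup>2"
  proof -
    have "7987/33750 - 45487/33750 * m + 845/432 * m\<^sup>2
        = 845/432 * (m - 13996/40625)\<^sup>2 + 52597/11718750"
      by (simp add: algebra_simps power2_eq_square)
    then show ?thesis
      by (simp add: add_nonneg_pos)
  qed
  moreover have "4 * (1 - m) * (962/10000 - m * (1 - m)\<^sup>2 / 2 - (1 - 2*m)^3 / 27) - (m * (1 - m) - m\<^sup>2 / 2)\<^sup>2
      = 7987/33750 - 45487/33750 * m + 7/3 * m\<^sup>2 - 1/27 * m^3 - 155/108 * m^4"
    by (simp add: field_simps power2_eq_square power3_eq_cube power4_eq_xxxx)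
  ultimately show ?thesis
    by linarith
qed

lemma reduced_poly_eq:
  assumes "a + b + u + y + z = 1"
  shows "reduced_poly a b u y z
    = a * b * (1 - (a + b)) + (a + b) * (1 - (a + b))\<^sup>2 / 2 - b * y\<^sup>2 / 2 + u\<^sup>2 * (y - (a + b)) / 4"
proof -
  have "reduced_poly a b u y z
      = a * b * (u + y + z) + (a + b) * (u + y + z)\<^sup>2 / 2 - b * y\<^sup>2 / 2 + u\<^sup>2 * (y - (a + b)) / 4"
    unfolding reduced_poly_def by (simp add: field_simps power2_eq_square)
  moreover have "u + y + z = 1 - (a + b)"
    using assms by linarith
  ultimately show ?thesis
    by simp
qed

lemma reduced_poly_le_if_light:
  assumes "0 \<le> a" "0 \<le> b" "0 \<le> u" "0 \<le> y" "0 \<le> z" "a + b + u + y + z = 1" "y \<le> a + b"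
  shows "reduced_poly a b u y z \<le> sqrt 3 / 18"
proof -
  define m where "m = a + b"
  have m: "0 \<le> m" "m \<le> 1"
    using assms unfolding m_def by linarith+
  have "a * b \<le> m\<^sup>2 / 4"
    using sum_squares_ge_zero[of "a - b" 0] unfolding m_def by (simp add: power2_eq_square algebra_simps)
  then have "a * b * (1 - m) \<le> m\<^sup>2 / 4 * (1 - m)"
    using m by (intro mult_right_mono) auto
  moreover have "u\<^sup>2 * (y - m) \<le> 0" "0 \<le> b * y\<^sup>2"
    using assms unfolding m_def by (auto intro: mult_nonneg_nonpos)
  ultimately have "reduced_poly a b u y z \<le> m\<^sup>2 / 4 * (1 - m) + m * (1 - m)\<^sup>2 / 2"
    unfolding reduced_poly_eq[OF assms(6)] m_def by linarith
  also have "\<dots> = (m/2) * (1 - 2 * (m/2)) * (1 - m/2)"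
    by (simp add: field_simps power2_eq_square)
  also have "\<dots> \<le> sqrt 3 / 18"
    using m by (intro cubic_le_sqrt3_div_18) auto
  finally show ?thesis .
qed

lemma reduced_poly_le_if_heavy:
  assumes "0 \<le> a" "0 \<le> b" "0 \<le> u" "0 \<le> y" "0 \<le> z" "a + b + u + y + z = 1" "a + b < y"
  shows "reduced_poly a b u y z \<le> sqrt 3 / 18"
proof -
  define m where "m = a + b"
  define S where "S = 1 - m"
  have m: "0 \<le> m" "m \<le> 1/2" "0 < S"
    using assms unfolding m_def S_def by linarith+
  have "b * m\<^sup>2 \<le> b * y\<^sup>2"
    using assms m unfolding m_def by (intro mult_left_mono power_mono) auto
  moreover have "u\<^sup>2 * (y - m) \<le> 4 * (1 - 2*m)^3 / 27"
    using assms unfolding m_def by (intro sq_mult_le_of_add_le) auto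
  ultimately have "reduced_poly a b u y z \<le> (a * b * S - b * m\<^sup>2 / 2) + m * S\<^sup>2 / 2 + (1 - 2*m)^3 / 27"
    unfolding reduced_poly_eq[OF assms(6)] m_def S_def by linarith
  moreover have "4 * S * (a * b * S - b * m\<^sup>2 / 2) \<le> 4 * S * (962/10000 - m * S\<^sup>2 / 2 - (1 - 2*m)^3 / 27)"
    using quadratic_le_vertex[of S m b "m\<^sup>2 / 2"] heavy_case_poly_le[OF m(1,2)]
    unfolding S_def m_def by simp
  then have "a * b * S - b * m\<^sup>2 / 2 \<le> 962/10000 - m * S\<^sup>2 / 2 - (1 - 2*m)^3 / 27"
    using m(3) by simp
  moreover have "(962/10000 :: real) \<le> sqrt 3 / 18"
    using real_le_rsqrt[of "17316/10000" 3] by (simp add: power2_eq_square)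
  ultimately show ?thesis
    by linarith
qed

lemma reduced_poly_le:
  assumes "0 \<le> a" "0 \<le> b" "0 \<le> u" "0 \<le> y" "0 \<le> z" "a + b + u + y + z = 1"
  shows "reduced_poly a b u y z \<le> sqrt 3 / 18"
  using assms reduced_poly_le_if_light reduced_poly_le_if_heavy by (cases "y \<le> a + b") auto

lemma H2_blocks_le_reduced_poly:
  fixes a b c d y z q w :: real
  assumes "0 \<le> a" "0 \<le> b" "0 \<le> y" "2 * q \<le> y\<^sup>2" "2 * w \<le> z\<^sup>2"
  shows "a * (w + c * d + (c + d) * z + q + (c + d + z) * y + b * (c + d + z + y))
      + b * (w + c * d + (c + d) * z + (c + d + z) * y) + c * d * y
    \<le> reduced_poly a b (c + d) y z" (is "?L \<le> ?R")
proof -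
  have cd: "0 \<le> (c + d)\<^sup>2 / 4 - c * d"
    using sum_squares_ge_zero[of "c - d" 0] by (simp add: power2_eq_square algebra_simps)
  have "?R - ?L = (a + b) * ((c + d)\<^sup>2 / 4 - c * d) + (a + b) * (z\<^sup>2 / 2 - w)
      + a * (y\<^sup>2 / 2 - q) + y * ((c + d)\<^sup>2 / 4 - c * d)"
    unfolding reduced_poly_def by (simp add: field_simps power2_eq_square)
  moreover have "0 \<le> (a + b) * ((c + d)\<^sup>2 / 4 - c * d) + (a + b) * (z\<^sup>2 / 2 - w)
      + a * (y\<^sup>2 / 2 - q) + y * ((c + d)\<^sup>2 / 4 - c * d)"
    using assms cd by (intro add_nonneg_nonneg mult_nonneg_nonneg) auto
  ultimately show ?thesis
    by linarith
qed

lemma lagrangian_poly_H2_le: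
  fixes x :: "nat \<Rightarrow> real"
  assumes "4 \<le> n" "D \<subseteq> {1..n} - {1, 2, 3, 4}"
    and nonneg: "\<forall>i\<in>{1..n}. 0 \<le> x i" and total: "(\<Sum>i\<in>{1..n}. x i) = 1"
  shows "lagrangian_poly (H2 n D) x \<le> sqrt 3 / 18"
proof -
  define Z where "Z = {1..n} - {1, 2, 3, 4} - D"
  define T where "T = insert 3 (insert 4 Z)"
  have fin: "finite D" "finite Z" "finite T"
    using finite_subset[OF assms(2)] unfolding Z_def T_def by simp_all
  have V: "{1..n} = insert 1 (insert 2 (T \<union> D))" "{1..n} - {1} = insert 2 (T \<union> D)"
    "{1..n} - {1, 2} = T \<union> D" "T \<inter> D = {}" "1 \<notin> insert 2 (T \<union> D)" "2 \<notin> T \<union> D"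
    using assms(1,2) unfolding T_def Z_def by auto
  have Z34: "3 \<notin> insert 4 Z" "4 \<notin> Z"
    unfolding Z_def by auto
  have sum_T: "sum x T = x 3 + x 4 + sum x Z"
    unfolding T_def using fin(2) Z34 by simp
  have pair_sum_T: "pair_sum x T = pair_sum x Z + x 3 * x 4 + (x 3 + x 4) * sum x Z"
    unfolding T_def using fin(2) Z34 by (simp add: pair_sum_insert algebra_simps)
  have nonneg_on: "\<And>i. i \<in> D \<union> Z \<union> {1, 2, 3, 4} \<Longrightarrow> 0 \<le> x i"
    using nonneg assms(1,2) unfolding Z_def by auto
  have "x 1 + x 2 + (x 3 + x 4) + sum x D + sum x Z = 1"
    using total fin V(5,6) unfolding V(1) by (simp add: sum.union_disjoint V(4) sum_T)
  have "lagrangian_poly (H2 n D) x = x 1 * pair_sum x (insert 2 (T \<union> D))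
      + x 2 * (pair_sum x (T \<union> D) - pair_sum x D) + x 3 * x 4 * sum x D"
    using lagrangian_poly_H2[of n D x] assms(1,2) unfolding V(2,3) by simp
  also have "\<dots> = x 1 * (pair_sum x Z + x 3 * x 4 + (x 3 + x 4) * sum x Z + pair_sum x D
          + (x 3 + x 4 + sum x Z) * sum x D + x 2 * (x 3 + x 4 + sum x Z + sum x D))
      + x 2 * (pair_sum x Z + x 3 * x 4 + (x 3 + x 4) * sum x Z + (x 3 + x 4 + sum x Z) * sum x D)
      + x 3 * x 4 * sum x D"
    using fin V(4,6)
    by (simp add: pair_sum_insert pair_sum_union sum.union_disjoint sum_T pair_sum_T algebra_simps)
  also have "\<dots> \<le> reduced_poly (x 1) (x 2) (x 3 + x 4) (sum x D) (sum x Z)"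
    using fin nonneg_on
    by (intro H2_blocks_le_reduced_poly sum_nonneg pair_sum_le_half_square) auto
  also have "\<dots> \<le> sqrt 3 / 18"
    using nonneg_on \<open>x 1 + x 2 + (x 3 + x 4) + sum x D + sum x Z = 1\<close>
    by (intro reduced_poly_le add_nonneg_nonneg sum_nonneg) auto
  finally show ?thesis .
qed

lemma lagrangian_le:
  assumes "1 \<le> n"
    and "\<And>x. \<forall>i\<in>{1..n}. 0 \<le> x i \<Longrightarrow> (\<Sum>i\<in>{1..n}. x i) = 1 \<Longrightarrow> lagrangian_poly G x \<le> c"
  shows "lagrangian n G \<le> c"
  unfolding lagrangian_def
proof (rule cSup_least)
  let ?e = "\<lambda>i::nat. if i = 1 then 1 else 0 :: real"
  have "(\<Sum>i\<in>{1..n}. ?e i) = 1"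
    using assms(1) by (simp add: sum.delta)
  then have "lagrangian_poly G ?e \<in> {lagrangian_poly G x |x. (\<forall>i\<in>{1..n}. 0 \<le> x i) \<and> (\<Sum>i\<in>{1..n}. x i) = 1}"
    by auto
  then show "{lagrangian_poly G x |x. (\<forall>i\<in>{1..n}. 0 \<le> x i) \<and> (\<Sum>i\<in>{1..n}. x i) = 1} \<noteq> {}"
    by blast
qed (use assms(2) in blast)

theorem lemma4p11:
  fixes n :: nat and D :: "nat set"
  assumes "n \<ge> 6"
    and "D \<subseteq> {1..n} - {1,2,3,4}"
    and "card D \<ge> 2"
  shows "lagrangian n (H2 n D) \<le> sqrt 3 / 18"
  \<comment> \<open>only \<open>n \<ge> 4\<close> is used; the bound holds without \<open>card D \<ge> 2\<close>\<close>
  using assms(1,2) by (intro lagrangian_le lagrangian_poly_H2_le) auto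

end
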